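(* Let $A$ be a locally convex topological vector space over $\mathbb C$ and $K\subset A$. Then $$\{V\in\mathrm{Max}\,A: F(V)\cap S(K,\mathbb C\setminus\{0\})\ne\emptyset\}\subset\check K,$$ with equality if $K$ is convex and compact.
   Context: $\mathrm{Max}\,A$ is the set of closed subspaces of $A$; $A^\vee$ the continuous dual; $F(V)=\{\phi\in A^\vee:\phi|_V=0\}$; $S(K,U)=\{\phi\in A^\vee:\phi(K)\subset U\}$; $\check K=\{V\in\mathrm{Max}\,A: V\cap K=\emptyset\}$. *)

theory Defs
  imports "HOL-Analysis.Analysis"
begin

definition cvs_axioms :: "(complex \<Rightarrow> 'a::ab_group_add \<Rightarrow> 'a) \<Rightarrow> bool" where
  "cvs_axioms sm \<longleftrightarrow>
     (\<forall>x. sm 1 x = x) \<and>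
     (\<forall>a b x. sm (a * b) x = sm a (sm b x)) \<and>
     (\<forall>a b x. sm (a + b) x = sm a x + sm b x) \<and>
     (\<forall>a x y. sm a (x + y) = sm a x + sm a y)"

definition c_convex :: "(complex \<Rightarrow> 'a::ab_group_add \<Rightarrow> 'a) \<Rightarrow> 'a set \<Rightarrow> bool" where
  "c_convex sm K \<longleftrightarrow>
     (\<forall>x\<in>K. \<forall>y\<in>K. \<forall>t::real. 0 \<le> t \<and> t \<le> 1 \<longrightarrow>
        sm (complex_of_real t) x + sm (complex_of_real (1 - t)) y \<in> K)"

definition locally_convex_tvs ::
    "(complex \<Rightarrow> 'a::{ab_group_add,topological_space} \<Rightarrow> 'a) \<Rightarrow> bool" where
  "locally_convex_tvs sm \<longleftrightarrow>
     cvs_axioms sm \<and>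
     continuous_on UNIV (\<lambda>p::'a \<times> 'a. fst p + snd p) \<and>
     continuous_on UNIV (\<lambda>p::complex \<times> 'a. sm (fst p) (snd p)) \<and>
     (\<forall>U. open U \<and> 0 \<in> U \<longrightarrow> (\<exists>W. open W \<and> 0 \<in> W \<and> W \<subseteq> U \<and> c_convex sm W))"

definition cdual :: "(complex \<Rightarrow> 'a::{ab_group_add,topological_space} \<Rightarrow> 'a) \<Rightarrow> ('a \<Rightarrow> complex) set" where
  "cdual sm = {\<phi>. (\<forall>x y. \<phi> (x + y) = \<phi> x + \<phi> y) \<and> (\<forall>c x. \<phi> (sm c x) = c * \<phi> x)
                  \<and> continuous_on UNIV \<phi>}"

definition MaxA :: "(complex \<Rightarrow> 'a::{ab_group_add,topological_space} \<Rightarrow> 'a) \<Rightarrow> 'a set set" where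
  "MaxA sm = {V. closed V \<and> 0 \<in> V \<and> (\<forall>x\<in>V. \<forall>y\<in>V. x + y \<in> V) \<and> (\<forall>c. \<forall>x\<in>V. sm c x \<in> V)}"

definition Fann :: "(complex \<Rightarrow> 'a::{ab_group_add,topological_space} \<Rightarrow> 'a) \<Rightarrow> 'a set \<Rightarrow> ('a \<Rightarrow> complex) set" where
  "Fann sm V = {\<phi> \<in> cdual sm. \<forall>v\<in>V. \<phi> v = 0}"

definition Sset :: "(complex \<Rightarrow> 'a::{ab_group_add,topological_space} \<Rightarrow> 'a) \<Rightarrow> 'a set \<Rightarrow> complex set \<Rightarrow> ('a \<Rightarrow> complex) set" where
  "Sset sm K U = {\<phi> \<in> cdual sm. \<phi> ` K \<subseteq> U}"

definition Kcheck :: "(complex \<Rightarrow> 'a::{ab_group_add,topological_space} \<Rightarrow> 'a) \<Rightarrow> 'a set \<Rightarrow> 'a set set" where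
  "Kcheck sm K = {V \<in> MaxA sm. V \<inter> K = {}}"

end

(* Let V be a closed subspace missing the compact convex set K. Compactness (tube lemma) and
   local convexity give an open convex neighbourhood W of 0 with (W + K) \<inter> V = {}, so
   S = K + V + W is open, convex, avoids 0 and is stable under translation by V. The cone over S
   is an open convex cone without 0, so by the cone form of the Hahn-Banach theorem some
   real-linear f is positive on S. It is continuous because it is bounded near 0, it vanishes on
   V because it stays positive on each line k + R v through S, and its complexification lies in
   F(V) \<inter> S(K, C - {0}).
   Conversely, a functional vanishing on V and nowhere on K forces V \<inter> K = {}. *)

theory Submission
  imports Defs
begin

(* The cone form of the Hahn-Banach theorem (positive_functional below), proved by Zorn's lemma
   on graphs of partial linear functionals. *)
locale internal_cone = vector_space scale
  for scale :: "real \<Rightarrow> 'a::ab_group_add \<Rightarrow> 'a" +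
  fixes P :: "'a set" and x0 :: 'a
  assumes add_mem: "x \<in> P \<Longrightarrow> y \<in> P \<Longrightarrow> x + y \<in> P"
    and scale_mem: "x \<in> P \<Longrightarrow> 0 < t \<Longrightarrow> scale t x \<in> P"
    and zero_notin: "0 \<notin> P"
    and internal: "\<exists>e>0. x0 + scale e y \<in> P"
begin

lemma x0_mem: "x0 \<in> P"
  using internal[of 0] by auto

definition positive_graph :: "('a \<times> real) set \<Rightarrow> bool" where
  "positive_graph G \<longleftrightarrow> (x0, 1) \<in> G \<and> single_valued G
     \<and> (\<forall>x a y b. (x, a) \<in> G \<longrightarrow> (y, b) \<in> G \<longrightarrow> (x + y, a + b) \<in> G)
     \<and> (\<forall>x a r. (x, a) \<in> G \<longrightarrow> (scale r x, r * a) \<in> G)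
     \<and> (\<forall>x a. (x, a) \<in> G \<longrightarrow> x \<in> P \<longrightarrow> 0 \<le> a)"

lemma positive_graphD:
  assumes "positive_graph G"
  shows positive_graph_x0: "(x0, 1) \<in> G"
    and positive_graph_unique: "(x, a) \<in> G \<Longrightarrow> (x, b) \<in> G \<Longrightarrow> a = b"
    and positive_graph_add: "(x, a) \<in> G \<Longrightarrow> (y, b) \<in> G \<Longrightarrow> (x + y, a + b) \<in> G"
    and positive_graph_scale: "(x, a) \<in> G \<Longrightarrow> (scale r x, r * a) \<in> G"
    and positive_graph_nonneg: "(x, a) \<in> G \<Longrightarrow> x \<in> P \<Longrightarrow> 0 \<le> a"
  using assms unfolding positive_graph_def single_valued_def by blast+

lemma positive_graphI:
  assumes "(x0, 1) \<in> G"
    and "\<And>x a b. (x, a) \<in> G \<Longrightarrow> (x, b) \<in> G \<Longrightarrow> a = b"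
    and "\<And>x a y b. (x, a) \<in> G \<Longrightarrow> (y, b) \<in> G \<Longrightarrow> (x + y, a + b) \<in> G"
    and "\<And>x a r. (x, a) \<in> G \<Longrightarrow> (scale r x, r * a) \<in> G"
    and "\<And>x a. (x, a) \<in> G \<Longrightarrow> x \<in> P \<Longrightarrow> 0 \<le> a"
  shows "positive_graph G"
  using assms unfolding positive_graph_def single_valued_def by blast

lemma positive_graph_line: "positive_graph (range (\<lambda>t. (scale t x0, t)))"
proof (rule positive_graphI)
  have "x0 \<noteq> 0"
    using x0_mem zero_notin by auto
  then show "a = b" if "(x, a) \<in> range (\<lambda>t. (scale t x0, t))" "(x, b) \<in> range (\<lambda>t. (scale t x0, t))"
    for x a b
    using that by auto
  show "0 \<le> a" if "(x, a) \<in> range (\<lambda>t. (scale t x0, t))" "x \<in> P" for x a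
  proof (rule ccontr)
    assume "\<not> 0 \<le> a"
    then have "scale (- a) x0 \<in> P"
      using scale_mem x0_mem by (metis neg_0_less_iff_less not_le scale_minus_left)
    then have "scale a x0 + scale (- a) x0 \<in> P"
      using that add_mem by fastforce
    then show False
      using zero_notin by simp
  qed
qed (auto simp flip: scale_left_distrib simp: image_iff)

lemma positive_graph_Union:
  assumes "C \<noteq> {}" and chain: "subset.chain {G. positive_graph G} C"
  shows "positive_graph (\<Union>C)"
proof -
  have good: "positive_graph G" if "G \<in> C" for G
    using chain that unfolding subset.chain_def by blast
  have common: "\<exists>G\<in>C. p \<in> G \<and> q \<in> G" if "p \<in> \<Union>C" "q \<in> \<Union>C" for p q
    using that chain unfolding subset.chain_def by blast
  show ?thesis
  proof (rule positive_graphI)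
    show "(x0, 1) \<in> \<Union>C"
      using assms(1) good positive_graph_x0 by blast
    show "a = b" if "(x, a) \<in> \<Union>C" "(x, b) \<in> \<Union>C" for x a b
      using common[OF that] good positive_graph_unique by blast
    show "(x + y, a + b) \<in> \<Union>C" if "(x, a) \<in> \<Union>C" "(y, b) \<in> \<Union>C" for x a y b
      using common[OF that] good positive_graph_add by blast
  qed (use good positive_graph_scale positive_graph_nonneg in blast)+
qed

lemma positive_graph_diff:
  assumes "positive_graph G" "(x, a) \<in> G" "(y, b) \<in> G"
  shows "(x - y, a - b) \<in> G"
  using positive_graph_add[OF assms(1,2) positive_graph_scale[OF assms(1,3), of "- 1"]] by simp

lemma exists_scaled_x0_plus: "\<exists>t>0. scale t x0 + y \<in> P"
proof -
  obtain e where "e > 0" "x0 + scale e y \<in> P"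
    using internal by blast
  then have "scale (1 / e) (x0 + scale e y) \<in> P"
    using scale_mem by simp
  then have "scale (1 / e) x0 + y \<in> P"
    using \<open>e > 0\<close> by (simp add: scale_right_distrib)
  then show ?thesis
    using \<open>e > 0\<close> by (intro exI[of _ "1 / e"]) simp
qed

(* Every positive extension of G to x takes a value c with these bounds; x0 being internal makes
   both bound sets nonempty. *)
lemma separating_value:
  assumes G: "positive_graph G"
  obtains c where "\<And>z a. (z, a) \<in> G \<Longrightarrow> z + x \<in> P \<Longrightarrow> - a \<le> c"
    and "\<And>w b. (w, b) \<in> G \<Longrightarrow> w - x \<in> P \<Longrightarrow> c \<le> b"
proof -
  define A where "A = {- a | z a. (z, a) \<in> G \<and> z + x \<in> P}"
  have le: "- a \<le> b" if "(z, a) \<in> G" "z + x \<in> P" "(w, b) \<in> G" "w - x \<in> P" for z a w b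
  proof -
    have "(z + x) + (w - x) \<in> P"
      using add_mem that by blast
    then show ?thesis
      using positive_graph_nonneg[OF G positive_graph_add[OF G that(1,3)]] by simp
  qed
  obtain s where "s > 0" "scale s x0 + x \<in> P"
    using exists_scaled_x0_plus by blast
  moreover have "(scale s x0, s) \<in> G"
    using positive_graph_scale[OF G positive_graph_x0[OF G], of s] by simp
  ultimately have "- s \<in> A"
    unfolding A_def by blast
  obtain t where "scale t x0 + - x \<in> P"
    using exists_scaled_x0_plus by blast
  moreover have "(scale t x0, t) \<in> G"
    using positive_graph_scale[OF G positive_graph_x0[OF G], of t] by simp
  ultimately have "bdd_above A"
    unfolding A_def bdd_above_def using le by fastforce
  show ?thesis
  proof (rule that[of "Sup A"])
    show "- a \<le> Sup A" if "(z, a) \<in> G" "z + x \<in> P" for z a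
      using cSup_upper[OF _ \<open>bdd_above A\<close>] that unfolding A_def by blast
    show "Sup A \<le> b" if "(w, b) \<in> G" "w - x \<in> P" for w b
      using cSup_least[of A b] \<open>- s \<in> A\<close> le that unfolding A_def by blast
  qed
qed

lemma positive_graph_extension_unique:
  assumes G: "positive_graph G" and x: "x \<notin> Domain G"
    and "(z1, a1) \<in> G" "(z2, a2) \<in> G" "z1 + scale t1 x = z2 + scale t2 x"
  shows "t1 = t2"
proof (rule ccontr)
  assume "t1 \<noteq> t2"
  have eq: "scale (t1 - t2) x = z2 - z1"
    using assms(5) unfolding scale_left_diff_distrib
    by (metis add_diff_cancel_left add_diff_cancel_right)
  have "x = scale (1 / (t1 - t2)) (z2 - z1)"
    unfolding eq[symmetric] using \<open>t1 \<noteq> t2\<close> by simp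
  moreover have "(scale (1 / (t1 - t2)) (z2 - z1), (1 / (t1 - t2)) * (a2 - a1)) \<in> G"
    using positive_graph_scale[OF G positive_graph_diff[OF G assms(4,3)]] .
  ultimately show False
    using x by (metis DomainI)
qed

lemma positive_graph_extension_nonneg:
  assumes G: "positive_graph G"
    and lower: "\<And>z a. (z, a) \<in> G \<Longrightarrow> z + x \<in> P \<Longrightarrow> - a \<le> c"
    and upper: "\<And>w b. (w, b) \<in> G \<Longrightarrow> w - x \<in> P \<Longrightarrow> c \<le> b"
    and zb: "(z, b) \<in> G" and P: "z + scale t x \<in> P"
  shows "0 \<le> b + t * c"
proof -
  consider "t = 0" | "t > 0" | "t < 0"
    by linarith
  then show ?thesis
  proof cases
    case 1
    then show ?thesis
      using P positive_graph_nonneg[OF G zb] by simp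
  next
    case 2
    have "scale (1 / t) z + x \<in> P"
      using scale_mem[OF P, of "1 / t"] 2 by (simp add: scale_right_distrib)
    then have "- ((1 / t) * b) \<le> c"
      by (rule lower[OF positive_graph_scale[OF G zb]])
    then show ?thesis
      using 2 by (simp add: field_simps)
  next
    case 3
    have "scale (- 1 / t) z - x \<in> P"
      using scale_mem[OF P, of "- 1 / t"] 3 by (simp add: scale_right_distrib)
    then have "c \<le> (- 1 / t) * b"
      by (rule upper[OF positive_graph_scale[OF G zb]])
    then show ?thesis
      using 3 by (simp add: field_simps)
  qed
qed

lemma positive_graph_extension:
  assumes G: "positive_graph G" and x: "x \<notin> Domain G"
    and lower: "\<And>z a. (z, a) \<in> G \<Longrightarrow> z + x \<in> P \<Longrightarrow> - a \<le> c"
    and upper: "\<And>w b. (w, b) \<in> G \<Longrightarrow> w - x \<in> P \<Longrightarrow> c \<le> b"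
  shows "positive_graph {(z + scale t x, a + t * c) | z a t. (z, a) \<in> G}" (is "positive_graph ?G")
proof (rule positive_graphI)
  have "(x0 + scale 0 x, 1 + 0 * c) \<in> ?G"
    using positive_graph_x0[OF G] by blast
  then show "(x0, 1) \<in> ?G"
    by simp
  show "a = b" if ya: "(y, a) \<in> ?G" and yb: "(y, b) \<in> ?G" for y a b
  proof -
    obtain z1 a1 t1 z2 a2 t2 where "y = z1 + scale t1 x" "a = a1 + t1 * c" "(z1, a1) \<in> G"
      and "y = z2 + scale t2 x" "b = a2 + t2 * c" "(z2, a2) \<in> G"
      using ya yb by blast
    moreover from this have "t1 = t2"
      using positive_graph_extension_unique[OF G x] by metis
    ultimately show ?thesis
      using positive_graph_unique[OF G] by auto
  qed
  show "(y + y', a + b) \<in> ?G" if y: "(y, a) \<in> ?G" and y': "(y', b) \<in> ?G" for y a y' b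
  proof -
    obtain z a1 t z' a2 t' where "y = z + scale t x" "a = a1 + t * c" "(z, a1) \<in> G"
      and "y' = z' + scale t' x" "b = a2 + t' * c" "(z', a2) \<in> G"
      using y y' by blast
    moreover from this have "(z + z' + scale (t + t') x, a1 + a2 + (t + t') * c) \<in> ?G"
      using positive_graph_add[OF G] by blast
    ultimately show ?thesis
      by (simp add: scale_left_distrib algebra_simps)
  qed
  show "(scale r y, r * a) \<in> ?G" if ya: "(y, a) \<in> ?G" for y a r
  proof -
    obtain z b t where "y = z + scale t x" "a = b + t * c" "(z, b) \<in> G"
      using ya by blast
    moreover from this have "(scale r z + scale (r * t) x, r * b + (r * t) * c) \<in> ?G"
      using positive_graph_scale[OF G] by blast
    ultimately show ?thesis
      by (simp add: scale_right_distrib algebra_simps)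
  qed
  show "0 \<le> a" if ya: "(y, a) \<in> ?G" and yP: "y \<in> P" for y a
  proof -
    obtain z b t where "y = z + scale t x" "a = b + t * c" "(z, b) \<in> G"
      using ya by blast
    then show ?thesis
      using positive_graph_extension_nonneg[OF G, of x c] lower upper yP by blast
  qed
qed

lemma maximal_positive_graph_total:
  assumes M: "positive_graph M" and max: "\<And>G. positive_graph G \<Longrightarrow> M \<subseteq> G \<Longrightarrow> G = M"
  shows "x \<in> Domain M"
proof (rule ccontr)
  assume x: "x \<notin> Domain M"
  obtain c where lower: "\<And>z a. (z, a) \<in> M \<Longrightarrow> z + x \<in> P \<Longrightarrow> - a \<le> c"
    and upper: "\<And>w b. (w, b) \<in> M \<Longrightarrow> w - x \<in> P \<Longrightarrow> c \<le> b"
    using separating_value[OF M] by blast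
  define G where "G = {(z + scale t x, a + t * c) | z a t. (z, a) \<in> M}"
  have "positive_graph G"
    unfolding G_def using positive_graph_extension[OF M x lower upper] .
  moreover have "M \<subseteq> G"
  proof
    fix p assume "p \<in> M"
    then have "(fst p + scale 0 x, snd p + 0 * c) \<in> G"
      unfolding G_def by (metis (mono_tags, lifting) CollectI prod.collapse)
    then show "p \<in> G"
      by simp
  qed
  moreover have "(0 + scale 1 x, 0 + 1 * c) \<in> G"
    unfolding G_def using positive_graph_scale[OF M positive_graph_x0[OF M], of 0] by force
  ultimately show False
    using max x by (metis DomainI add_0 scale_one)
qed

lemma positive_functional:
  obtains f where "Modules.additive f" and "\<And>r x. f (scale r x) = r * f x" and "f x0 = 1"
    and "\<And>x. x \<in> P \<Longrightarrow> 0 \<le> f x"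
proof -
  obtain M where M: "positive_graph M"
    and max: "\<And>G. positive_graph G \<Longrightarrow> M \<subseteq> G \<Longrightarrow> G = M"
    using subset_Zorn_nonempty[of "{G. positive_graph G}"] positive_graph_line positive_graph_Union
    by auto
  define f where "f x = (THE a. (x, a) \<in> M)" for x
  have f_eq: "f x = a" if "(x, a) \<in> M" for x a
    unfolding f_def using that positive_graph_unique[OF M] by blast
  have graph: "(x, f x) \<in> M" for x
    using maximal_positive_graph_total[OF M max, of x] f_eq by auto
  show ?thesis
  proof (rule that)
    show "Modules.additive f"
      by standard (rule f_eq[OF positive_graph_add[OF M graph graph]])
  qed (auto intro: f_eq positive_graph_scale[OF M graph] positive_graph_x0[OF M]
         positive_graph_nonneg[OF M graph])
qed

end

locale complex_tvs = module sm
  for sm :: "complex \<Rightarrow> 'a::{ab_group_add,topological_space} \<Rightarrow> 'a" +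
  assumes continuous_on_plus: "continuous_on UNIV (\<lambda>p::'a \<times> 'a. fst p + snd p)"
    and continuous_on_sm: "continuous_on UNIV (\<lambda>p::complex \<times> 'a. sm (fst p) (snd p))"
begin

abbreviation rscale :: "real \<Rightarrow> 'a \<Rightarrow> 'a" where
  "rscale r x \<equiv> sm (complex_of_real r) x"

sublocale real: vector_space rscale
  by unfold_locales (simp_all add: scale_left_distrib scale_right_distrib)

lemma continuous_on_vadd:
  fixes f g :: "'b::topological_space \<Rightarrow> 'a"
  assumes "continuous_on S f" "continuous_on S g"
  shows "continuous_on S (\<lambda>x. f x + g x)"
  using continuous_on_compose2[OF continuous_on_plus continuous_on_Pair[OF assms]] by simp

lemma continuous_on_vscale:
  fixes g :: "'b::topological_space \<Rightarrow> 'a"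
  assumes "continuous_on S c" "continuous_on S g"
  shows "continuous_on S (\<lambda>x. sm (c x) (g x))"
  using continuous_on_compose2[OF continuous_on_sm continuous_on_Pair[OF assms]] by simp

lemma open_affine_vimage: "open U \<Longrightarrow> open {y. sm c y + b \<in> U}"
  using open_vimage[of U "\<lambda>y. sm c y + b"]
  by (simp add: vimage_def continuous_on_vadd continuous_on_vscale)

lemma open_imp_internal:
  assumes "open U" "y \<in> U"
  shows "\<exists>e>0. y + rscale e u \<in> U"
proof -
  have "continuous_on UNIV (\<lambda>r. y + rscale r u)"
    by (intro continuous_on_vadd continuous_on_vscale continuous_on_of_real_id continuous_on_const)
  then have "open ((\<lambda>r. y + rscale r u) -` U)"
    using open_vimage assms(1) by blast
  moreover have "0 \<in> (\<lambda>r. y + rscale r u) -` U"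
    using assms(2) by simp
  ultimately obtain e where "e > 0" "ball 0 e \<subseteq> (\<lambda>r. y + rscale r u) -` U"
    unfolding open_contains_ball by blast
  moreover have "e / 2 \<in> ball 0 e"
    using \<open>e > 0\<close> by simp
  ultimately show ?thesis
    using half_gt_zero by blast
qed

lemma open_set_plus:
  fixes W :: "'a set"
  assumes "open W"
  shows "open (A + W)"
proof -
  have "A + W = (\<Union>a\<in>A. {y. sm 1 y + - a \<in> W})"
    by (force simp: set_plus_def algebra_simps)
  then show ?thesis
    by (simp only:) (intro open_UN ballI open_affine_vimage assms)
qed

lemma continuous_on_functional_if_bounded:
  fixes f :: "'a \<Rightarrow> real"
  assumes f: "Modules.additive f" "\<And>r x. f (rscale r x) = r * f x"
    and N: "open N" "0 \<in> N" "\<And>u. u \<in> N \<Longrightarrow> \<bar>f u\<bar> \<le> 1"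
  shows "continuous_on UNIV f"
proof -
  interpret f: additive f by (rule f(1))
  have "open (f -` B)" if "open B" for B
    unfolding open_subopen[of "f -` B"]
  proof
    fix x assume "x \<in> f -` B"
    then obtain e where "e > 0" and e: "ball (f x) e \<subseteq> B"
      using \<open>open B\<close> open_contains_ball by blast
    define U where "U = {y. rscale (2 / e) y + - rscale (2 / e) x \<in> N}"
    have "open U"
      unfolding U_def using open_affine_vimage[OF N(1)] .
    moreover have "x \<in> U"
      unfolding U_def using N(2) by simp
    moreover have "f y \<in> B" if "y \<in> U" for y
    proof -
      have "f (rscale (2 / e) y + - rscale (2 / e) x) = (2 / e) * (f y - f x)"
        by (simp only: f.add f.minus f(2)) (simp add: right_diff_distrib)
      then have "\<bar>(2 / e) * (f y - f x)\<bar> \<le> 1"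
        using N(3) that unfolding U_def by fastforce
      then have "\<bar>f y - f x\<bar> < e"
        using \<open>e > 0\<close> by (simp add: abs_mult field_simps)
      then show ?thesis
        using e by (auto simp: dist_real_def abs_minus_commute)
    qed
    ultimately show "\<exists>U. open U \<and> x \<in> U \<and> U \<subseteq> f -` B"
      by blast
  qed
  then show ?thesis
    by (simp add: continuous_on_open_vimage)
qed

lemma continuous_on_functional_if_nonneg:
  fixes f :: "'a \<Rightarrow> real"
  assumes f: "Modules.additive f" "\<And>r x. f (rscale r x) = r * f x" "f x0 = 1"
    and U: "open U" "x0 \<in> U" "\<And>x. x \<in> U \<Longrightarrow> 0 \<le> f x"
  shows "continuous_on UNIV f"
proof (rule continuous_on_functional_if_bounded[OF f(1,2)])
  interpret f: additive f by (rule f(1))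
  let ?N = "{u. sm 1 u + x0 \<in> U} \<inter> {u. sm (- 1) u + x0 \<in> U}"
  show "open ?N"
    using open_affine_vimage[OF U(1)] by blast
  show "0 \<in> ?N"
    using U(2) by simp
  show "\<bar>f u\<bar> \<le> 1" if "u \<in> ?N" for u
  proof -
    have "0 \<le> f (u + x0)" "0 \<le> f (- u + x0)"
      using that U(3) by auto
    then show ?thesis
      by (simp add: f.add f.minus f.diff f(3))
  qed
qed

(* The unique complex-linear functional with real part f. *)
lemma complexification_in_cdual:
  fixes f :: "'a \<Rightarrow> real"
  assumes f: "Modules.additive f" "\<And>r x. f (rscale r x) = r * f x" "continuous_on UNIV f"
  shows "(\<lambda>x. complex_of_real (f x) - \<i> * complex_of_real (f (sm \<i> x))) \<in> cdual sm"
proof -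
  interpret f: additive f by (rule f(1))
  have f_sm: "f (sm c x) = Re c * f x + Im c * f (sm \<i> x)" for c x
  proof -
    have "sm c x = rscale (Re c) x + rscale (Im c) (sm \<i> x)"
      by (subst complex_eq) (simp add: scale_left_distrib mult.commute)
    then show ?thesis
      by (simp only: f.add f(2))
  qed
  define \<phi> where "\<phi> x = complex_of_real (f x) - \<i> * complex_of_real (f (sm \<i> x))" for x
  have "\<phi> (sm c x) = c * \<phi> x" for c x
  proof -
    have "f (sm \<i> (sm c x)) = - Im c * f x + Re c * f (sm \<i> x)"
      using f_sm[of "\<i> * c" x] by simp
    then show ?thesis
      unfolding \<phi>_def f_sm[of c x] by (simp add: complex_eq_iff algebra_simps)
  qed
  moreover have "\<phi> (x + y) = \<phi> x + \<phi> y" for x y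
    unfolding \<phi>_def by (simp add: f.add scale_right_distrib algebra_simps)
  moreover have "continuous_on UNIV (\<lambda>x. f (sm \<i> x))"
    by (rule continuous_on_compose2[OF f(3)])
      (auto intro: continuous_on_vscale continuous_on_const continuous_on_id)
  then have "continuous_on UNIV \<phi>"
    unfolding \<phi>_def using f(3) by (intro continuous_intros) auto
  ultimately show ?thesis
    unfolding cdual_def \<phi>_def[abs_def] by simp
qed

definition cone_over :: "'a set \<Rightarrow> 'a set" where
  "cone_over S = {y. \<exists>t>0. rscale t y \<in> S}"

lemma subset_cone_over: "S \<subseteq> cone_over S"
  unfolding cone_over_def by (force intro: exI[of _ 1])

lemma zero_notin_cone_over: "0 \<notin> S \<Longrightarrow> 0 \<notin> cone_over S"
  unfolding cone_over_def by simp

lemma cone_over_scale: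
  assumes "x \<in> cone_over S" "0 < r"
  shows "rscale r x \<in> cone_over S"
proof -
  obtain t where "t > 0" "rscale t x \<in> S"
    using assms(1) unfolding cone_over_def by blast
  moreover have "rscale (t / r) (rscale r x) = rscale t x"
    using assms(2) by (simp only: real.scale_scale) simp
  ultimately have "rscale (t / r) (rscale r x) \<in> S" "t / r > 0"
    using assms(2) by simp_all
  then show ?thesis
    unfolding cone_over_def by blast
qed

lemma open_cone_over:
  assumes "open S"
  shows "open (cone_over S)"
proof -
  have "cone_over S = (\<Union>t\<in>{0<..}. {y. rscale t y + 0 \<in> S})"
    unfolding cone_over_def by auto
  then show ?thesis
    by (simp only:) (intro open_UN ballI open_affine_vimage assms)
qed

lemma cone_over_add:
  assumes S: "c_convex sm S" and "x \<in> cone_over S" "y \<in> cone_over S"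
  shows "x + y \<in> cone_over S"
proof -
  obtain s t where "s > 0" "rscale s x \<in> S" "t > 0" "rscale t y \<in> S"
    using assms(2,3) unfolding cone_over_def by blast
  define l where "l = t / (s + t)"
  have "0 \<le> l" "l \<le> 1"
    unfolding l_def using \<open>s > 0\<close> \<open>t > 0\<close> by auto
  then have "rscale l (rscale s x) + rscale (1 - l) (rscale t y) \<in> S"
    using S \<open>rscale s x \<in> S\<close> \<open>rscale t y \<in> S\<close> unfolding c_convex_def by blast
  moreover have "l * s = s * t / (s + t)" "(1 - l) * t = s * t / (s + t)"
    unfolding l_def using \<open>s > 0\<close> \<open>t > 0\<close> by (auto simp: field_simps)
  ultimately have "rscale (s * t / (s + t)) (x + y) \<in> S"
    by (simp only: real.scale_scale real.scale_right_distrib)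
  moreover have "s * t / (s + t) > 0"
    using \<open>s > 0\<close> \<open>t > 0\<close> by simp
  ultimately show ?thesis
    unfolding cone_over_def by blast
qed

lemma open_convex_positive_functional:
  assumes "open S" "c_convex sm S" "0 \<notin> S" "x0 \<in> S"
  obtains f where "Modules.additive f" "\<And>r x. f (rscale r x) = r * f x" "continuous_on UNIV f"
    "\<And>x. x \<in> S \<Longrightarrow> f x > 0"
proof -
  let ?P = "cone_over S"
  have "open ?P"
    using open_cone_over[OF assms(1)] .
  interpret internal_cone rscale ?P x0
  proof
    show "x + y \<in> ?P" if "x \<in> ?P" "y \<in> ?P" for x y
      using cone_over_add[OF assms(2) that] .
    show "rscale t x \<in> ?P" if "x \<in> ?P" "0 < t" for x t
      using cone_over_scale[OF that] .
    show "0 \<notin> ?P"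
      using zero_notin_cone_over[OF assms(3)] .
    show "\<exists>e>0. x0 + rscale e y \<in> ?P" for y
      using open_imp_internal[OF \<open>open ?P\<close> subsetD[OF subset_cone_over assms(4)]] .
  qed
  obtain f where f: "Modules.additive f" "\<And>r x. f (rscale r x) = r * f x" "f x0 = 1"
    and nonneg: "\<And>x. x \<in> ?P \<Longrightarrow> 0 \<le> f x"
    using positive_functional by metis
  interpret f: additive f by (rule f(1))
  have pos: "f y > 0" if y: "y \<in> ?P" for y
  proof -
    obtain e where "e > 0" "y + rscale e (- x0) \<in> ?P"
      using open_imp_internal[OF \<open>open ?P\<close> y] by blast
    moreover have "f (y + rscale e (- x0)) = f y - e"
      by (simp only: f.add f(2) f.minus f(3))
    ultimately show ?thesis
      using nonneg by fastforce
  qed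
  have "continuous_on UNIV f"
    using continuous_on_functional_if_nonneg[OF f \<open>open ?P\<close> x0_mem nonneg] .
  then show ?thesis
    using that[OF f(1,2)] pos subset_cone_over by blast
qed

lemma c_convex_set_plus:
  assumes "c_convex sm A" "c_convex sm B"
  shows "c_convex sm (A + B)"
  unfolding c_convex_def
proof (intro ballI allI impI)
  fix x y and t :: real
  assume "x \<in> A + B" "y \<in> A + B" and t: "0 \<le> t \<and> t \<le> 1"
  then obtain a b a' b' where "a \<in> A" "b \<in> B" "a' \<in> A" "b' \<in> B" "x = a + b" "y = a' + b'"
    by (auto elim!: set_plus_elim)
  moreover have "rscale t (a + b) + rscale (1 - t) (a' + b')
      = (rscale t a + rscale (1 - t) a') + (rscale t b + rscale (1 - t) b')"
    by (simp add: scale_right_distrib algebra_simps)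
  moreover have "rscale t a + rscale (1 - t) a' \<in> A" "rscale t b + rscale (1 - t) b' \<in> B"
    using assms t \<open>a \<in> A\<close> \<open>b \<in> B\<close> \<open>a' \<in> A\<close> \<open>b' \<in> B\<close> unfolding c_convex_def by blast+
  ultimately show "rscale t x + rscale (1 - t) y \<in> A + B"
    by (simp add: set_plus_intro)
qed

lemma functional_zero_if_positive_on_line:
  fixes f :: "'a \<Rightarrow> real"
  assumes f: "Modules.additive f" "\<And>r x. f (rscale r x) = r * f x"
    and pos: "\<And>r. f (x + rscale r v) > 0"
  shows "f v = 0"
proof (rule ccontr)
  interpret f: additive f by (rule f(1))
  assume "f v \<noteq> 0"
  have "f (x + rscale (- f x / f v) v) = 0"
    using \<open>f v \<noteq> 0\<close> by (simp only: f.add f(2)) simp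
  then show False
    using pos by (metis less_irrefl)
qed

end

lemma MaxAD:
  assumes "V \<in> MaxA sm"
  shows "closed V" "0 \<in> V" "x \<in> V \<Longrightarrow> y \<in> V \<Longrightarrow> x + y \<in> V" "x \<in> V \<Longrightarrow> sm c x \<in> V"
  using assms unfolding MaxA_def by auto

locale locally_convex_complex_tvs = complex_tvs +
  assumes convex_nhds: "open U \<Longrightarrow> 0 \<in> U \<Longrightarrow> \<exists>W. open W \<and> 0 \<in> W \<and> W \<subseteq> U \<and> c_convex sm W"

lemma locally_convex_complex_tvsI:
  assumes "locally_convex_tvs sm"
  shows "locally_convex_complex_tvs sm"
  using assms
  unfolding locally_convex_tvs_def cvs_axioms_def locally_convex_complex_tvs_def
    locally_convex_complex_tvs_axioms_def complex_tvs_def complex_tvs_axioms_def module_def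
  by auto

context locally_convex_complex_tvs
begin

lemma convex_nhd_avoiding:
  assumes "compact K" "closed V" "V \<inter> K = {}"
  obtains W where "open W" "0 \<in> W" "c_convex sm W" "(W + K) \<inter> V = {}"
proof -
  have "open ((\<lambda>p. fst p + snd p) -` (- V))"
    using open_vimage[OF _ continuous_on_plus] assms(2) by (simp add: open_Compl)
  moreover have "{0} \<times> K \<subseteq> (\<lambda>p. fst p + snd p) -` (- V)"
    using assms(3) by auto
  ultimately have "\<exists>X. 0 \<in> X \<and> open X \<and> X \<times> K \<subseteq> (\<lambda>p. fst p + snd p) -` (- V)"
    by (rule Elementary_Topology.tube_lemma[OF assms(1)])
  then obtain X where "0 \<in> X" "open X" and X: "X \<times> K \<subseteq> (\<lambda>p. fst p + snd p) -` (- V)"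
    by blast
  obtain W where "open W" "0 \<in> W" "W \<subseteq> X" "c_convex sm W"
    using convex_nhds[OF \<open>open X\<close> \<open>0 \<in> X\<close>] by auto
  moreover have "w + k \<notin> V" if "w \<in> W" "k \<in> K" for w k
  proof -
    have "(w, k) \<in> X \<times> K"
      using that \<open>W \<subseteq> X\<close> by auto
    then show ?thesis
      using X by auto
  qed
  then have "(W + K) \<inter> V = {}"
    by (auto elim!: set_plus_elim)
  ultimately show ?thesis
    using that by presburger
qed

lemma open_convex_superset_avoiding_zero:
  assumes V: "V \<in> MaxA sm" and K: "compact K" "c_convex sm K" "V \<inter> K = {}"
  obtains S where "open S" "c_convex sm S" "0 \<notin> S" "K \<subseteq> S"
    "\<And>x v. x \<in> S \<Longrightarrow> v \<in> V \<Longrightarrow> x + v \<in> S"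
proof -
  obtain W where W: "open W" "0 \<in> W" "c_convex sm W" "(W + K) \<inter> V = {}"
    using convex_nhd_avoiding[OF K(1) MaxAD(1)[OF V] K(3)] by blast
  have "open (K + V + W)"
    using open_set_plus[OF W(1)] .
  moreover have "c_convex sm V"
    using MaxAD(3,4)[OF V] unfolding c_convex_def by blast
  then have "c_convex sm (K + V + W)"
    using c_convex_set_plus K(2) W(3) by blast
  moreover have "0 \<notin> K + V + W"
  proof
    assume "0 \<in> K + V + W"
    then obtain k v w where "k \<in> K" "v \<in> V" "w \<in> W" "k + v + w = 0"
      by (auto elim!: set_plus_elim)
    then have "w + k = sm (- 1) v"
      by (simp add: add.commute add.left_commute eq_neg_iff_add_eq_0)
    moreover have "w + k \<in> W + K"
      using \<open>k \<in> K\<close> \<open>w \<in> W\<close> by (rule set_plus_intro[rotated])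
    ultimately show False
      using W(4) MaxAD(4)[OF V \<open>v \<in> V\<close>] by (metis IntI empty_iff)
  qed
  moreover have "K \<subseteq> K + V + W"
    using MaxAD(2)[OF V] W(2) by (metis add.right_neutral set_plus_intro subsetI)
  moreover have "x + v \<in> K + V + W" if "x \<in> K + V + W" "v \<in> V" for x v
  proof -
    obtain k v' w where "k \<in> K" "v' \<in> V" "w \<in> W" "x = k + v' + w"
      using \<open>x \<in> K + V + W\<close> by (auto elim!: set_plus_elim)
    moreover have "k + (v' + v) + w \<in> K + V + W"
      using MaxAD(3)[OF V \<open>v' \<in> V\<close> \<open>v \<in> V\<close>] calculation by (intro set_plus_intro)
    ultimately show ?thesis
      by (simp add: ac_simps)
  qed
  ultimately show ?thesis
    using that by blast
qed

lemma closed_subspace_separation: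
  assumes V: "V \<in> MaxA sm" and K: "compact K" "c_convex sm K" "V \<inter> K = {}"
  obtains \<phi> where "\<phi> \<in> Fann sm V" "\<phi> \<in> Sset sm K (- {0})"
proof (cases "K = {}")
  case True
  have "(\<lambda>_. 0) \<in> cdual sm"
    unfolding cdual_def by simp
  then show ?thesis
    using that True unfolding Fann_def Sset_def by auto
next
  case False
  then obtain k0 where "k0 \<in> K"
    by blast
  obtain S where S: "open S" "c_convex sm S" "0 \<notin> S" "K \<subseteq> S"
    and S_V: "\<And>x v. x \<in> S \<Longrightarrow> v \<in> V \<Longrightarrow> x + v \<in> S"
    using open_convex_superset_avoiding_zero[OF assms] by blast
  obtain f where f: "Modules.additive f" "\<And>r x. f (rscale r x) = r * f x" "continuous_on UNIV f"
    and pos: "\<And>x. x \<in> S \<Longrightarrow> f x > 0"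
    using open_convex_positive_functional[OF S(1-3)] \<open>k0 \<in> K\<close> S(4) by (metis subsetD)
  have f_V: "f v = 0" if "v \<in> V" for v
  proof (rule functional_zero_if_positive_on_line[OF f(1,2)])
    show "f (k0 + rscale r v) > 0" for r
      using pos[OF S_V[OF subsetD[OF S(4) \<open>k0 \<in> K\<close>] MaxAD(4)[OF V that]]] .
  qed
  define \<phi> where "\<phi> x = complex_of_real (f x) - \<i> * complex_of_real (f (sm \<i> x))" for x
  have "\<phi> \<in> cdual sm"
    unfolding \<phi>_def by (rule complexification_in_cdual[OF f])
  moreover have "\<phi> v = 0" if "v \<in> V" for v
    unfolding \<phi>_def using f_V that MaxAD(4)[OF V] by simp
  moreover have "\<phi> k \<noteq> 0" if "k \<in> K" for k
  proof -
    have "Re (\<phi> k) = f k"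
      unfolding \<phi>_def by simp
    then show ?thesis
      using pos S(4) that by fastforce
  qed
  ultimately show ?thesis
    by (intro that[of \<phi>]) (auto simp: Fann_def Sset_def)
qed

end

theorem corollary7p4:
  fixes sm :: "complex \<Rightarrow> 'a::{ab_group_add,topological_space} \<Rightarrow> 'a"
    and K :: "'a set"
  assumes "locally_convex_tvs sm"
  shows "{V \<in> MaxA sm. Fann sm V \<inter> Sset sm K (- {0}) \<noteq> {}} \<subseteq> Kcheck sm K
     \<and> (c_convex sm K \<and> compact K \<longrightarrow>
          {V \<in> MaxA sm. Fann sm V \<inter> Sset sm K (- {0}) \<noteq> {}} = Kcheck sm K)"
proof -
  interpret locally_convex_complex_tvs sm
    using assms by (rule locally_convex_complex_tvsI)
  have "V \<inter> K = {}" if "Fann sm V \<inter> Sset sm K (- {0}) \<noteq> {}" for V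
    using that unfolding Fann_def Sset_def by fastforce
  then have sub: "{V \<in> MaxA sm. Fann sm V \<inter> Sset sm K (- {0}) \<noteq> {}} \<subseteq> Kcheck sm K"
    unfolding Kcheck_def by blast
  have "Kcheck sm K \<subseteq> {V \<in> MaxA sm. Fann sm V \<inter> Sset sm K (- {0}) \<noteq> {}}"
    if "c_convex sm K" "compact K"
  proof
    fix V assume "V \<in> Kcheck sm K"
    then have "V \<in> MaxA sm" "V \<inter> K = {}"
      unfolding Kcheck_def by auto
    then show "V \<in> {V \<in> MaxA sm. Fann sm V \<inter> Sset sm K (- {0}) \<noteq> {}}"
      using closed_subspace_separation[of V K] that by blast
  qed
  with sub show ?thesis
    by blast
qed

end
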